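(* Let $R$ be an associative ring with identity. Then $R$ is NJ-symmetric in each of the following cases: (1) $R$ is left quasi-duo, or $R$ is right quasi-duo; (2) $R$ is abelian and J-clean; (3) $R$ is abelian and J-quasipolar; (4) $R$ is generalized weakly symmetric (GWS) and $x^2=0$ for every nilpotent $x\in R$ (i.e. the index of nilpotency of nilpotent elements is at most 2).
   Context: $N(R)$ denotes the set of nilpotent elements and $J(R)$ the Jacobson radical of $R$. $R$ is NJ-symmetric if for all $a,b,c\in R$, $abc\in N(R)$ implies $bac\in J(R)$. $R$ is left (right) quasi-duo if every maximal left (right) ideal of $R$ is a two-sided ideal. $R$ is abelian if every idempotent of $R$ is central. $R$ is J-clean if every $a\in R$ can be written $a=e+j$ with $e^2=e$ and $j\in J(R)$. For $a\in R$, $\mathrm{comm}(a)=\{y\in R: ya=ay\}$ and $\mathrm{comm}^2(a)=\{x\in R: xy=yx \text{ for all } y\in \mathrm{comm}(a)\}$; $R$ is J-quasipolar if for every $a\in R$ there is $f=f^2\in\mathrm{comm}^2(a)$ with $a+f\in J(R)$. $R$ is GWS if for all $a,b,c\in R$, $abc=0$ implies $bac\in N(R)$. *)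

theory Defs
  imports Main
begin

text \<open>Rings are modelled by the type class ring_1 (associative ring with identity);
the ring R is the whole type.\<close>

definition nilpotent :: "'a::ring_1 \<Rightarrow> bool" where
  "nilpotent x \<longleftrightarrow> (\<exists>n::nat. x ^ n = 0)"

definition left_ideal :: "'a::ring_1 set \<Rightarrow> bool" where
  "left_ideal I \<longleftrightarrow> 0 \<in> I \<and> (\<forall>x\<in>I. \<forall>y\<in>I. x - y \<in> I) \<and> (\<forall>r. \<forall>x\<in>I. r * x \<in> I)"

definition right_ideal :: "'a::ring_1 set \<Rightarrow> bool" where
  "right_ideal I \<longleftrightarrow> 0 \<in> I \<and> (\<forall>x\<in>I. \<forall>y\<in>I. x - y \<in> I) \<and> (\<forall>r. \<forall>x\<in>I. x * r \<in> I)"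

definition maximal_left_ideal :: "'a::ring_1 set \<Rightarrow> bool" where
  "maximal_left_ideal I \<longleftrightarrow> left_ideal I \<and> I \<noteq> UNIV \<and>
     (\<forall>K. left_ideal K \<and> I \<subseteq> K \<and> K \<noteq> UNIV \<longrightarrow> K = I)"

definition maximal_right_ideal :: "'a::ring_1 set \<Rightarrow> bool" where
  "maximal_right_ideal I \<longleftrightarrow> right_ideal I \<and> I \<noteq> UNIV \<and>
     (\<forall>K. right_ideal K \<and> I \<subseteq> K \<and> K \<noteq> UNIV \<longrightarrow> K = I)"

definition jacobson :: "'a::ring_1 set" where
  "jacobson = \<Inter> {I. maximal_left_ideal I}"

definition NJ_symmetric :: "'a::ring_1 itself \<Rightarrow> bool" where
  "NJ_symmetric _ \<longleftrightarrow> (\<forall>a b c :: 'a. nilpotent (a * b * c) \<longrightarrow> b * a * c \<in> jacobson)"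

definition left_quasi_duo :: "'a::ring_1 itself \<Rightarrow> bool" where
  "left_quasi_duo _ \<longleftrightarrow> (\<forall>I :: 'a set. maximal_left_ideal I \<longrightarrow> right_ideal I)"

definition right_quasi_duo :: "'a::ring_1 itself \<Rightarrow> bool" where
  "right_quasi_duo _ \<longleftrightarrow> (\<forall>I :: 'a set. maximal_right_ideal I \<longrightarrow> left_ideal I)"

definition abelian_ring :: "'a::ring_1 itself \<Rightarrow> bool" where
  "abelian_ring _ \<longleftrightarrow> (\<forall>e :: 'a. e * e = e \<longrightarrow> (\<forall>x. e * x = x * e))"

definition J_clean :: "'a::ring_1 itself \<Rightarrow> bool" where
  "J_clean _ \<longleftrightarrow> (\<forall>a :: 'a. \<exists>e j. e * e = e \<and> j \<in> jacobson \<and> a = e + j)"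

definition comm :: "'a::ring_1 \<Rightarrow> 'a set" where
  "comm a = {y. y * a = a * y}"

definition comm2 :: "'a::ring_1 \<Rightarrow> 'a set" where
  "comm2 a = {x. \<forall>y\<in>comm a. x * y = y * x}"

definition J_quasipolar :: "'a::ring_1 itself \<Rightarrow> bool" where
  "J_quasipolar _ \<longleftrightarrow> (\<forall>a :: 'a. \<exists>f. f * f = f \<and> f \<in> comm2 a \<and> a + f \<in> jacobson)"

definition GWS :: "'a::ring_1 itself \<Rightarrow> bool" where
  "GWS _ \<longleftrightarrow> (\<forall>a b c :: 'a. a * b * c = 0 \<longrightarrow> nilpotent (b * a * c))"

end

theory Submission
  imports Defs
begin

text \<open>(1) A maximal left (right) ideal that is two-sided is completely prime, so in a left
  (right) quasi-duo ring it contains one of \<open>a, b, c\<close> whenever it contains a nilpotent \<open>abc\<close>, and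
  then it contains \<open>bac\<close>. In the right-handed case this makes every \<open>1 - bacr\<close> right invertible,
  which forces \<open>bac \<in> J(R)\<close> just as left invertibility of every \<open>1 - rbac\<close> does.
  (2), (3) A J-quasipolar ring is J-clean, and in a J-clean ring \<open>R/J(R)\<close> is Boolean, hence
  commutative and reduced: a nilpotent \<open>abc\<close> lies in \<open>J(R)\<close>, and \<open>bac \<equiv> abc\<close> modulo \<open>J(R)\<close>.\<close>

lemma left_idealD:
  assumes "left_ideal I"
  shows left_ideal_zero: "0 \<in> I"
    and left_ideal_diff: "x \<in> I \<Longrightarrow> y \<in> I \<Longrightarrow> x - y \<in> I"
    and left_ideal_mult: "x \<in> I \<Longrightarrow> r * x \<in> I"
  using assms unfolding left_ideal_def by auto

lemma right_idealD:
  assumes "right_ideal I"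
  shows right_ideal_zero: "0 \<in> I"
    and right_ideal_diff: "x \<in> I \<Longrightarrow> y \<in> I \<Longrightarrow> x - y \<in> I"
    and right_ideal_mult: "x \<in> I \<Longrightarrow> x * r \<in> I"
  using assms unfolding right_ideal_def by auto

lemma left_ideal_add: "left_ideal I \<Longrightarrow> x \<in> I \<Longrightarrow> y \<in> I \<Longrightarrow> x + y \<in> I"
  using left_ideal_diff[of I x "0 - y"] left_ideal_diff[of I 0 y] left_ideal_zero[of I] by simp

lemma right_ideal_add: "right_ideal I \<Longrightarrow> x \<in> I \<Longrightarrow> y \<in> I \<Longrightarrow> x + y \<in> I"
  using right_ideal_diff[of I x "0 - y"] right_ideal_diff[of I 0 y] right_ideal_zero[of I] by simp

lemma left_ideal_one_iff_UNIV: "left_ideal I \<Longrightarrow> 1 \<in> I \<longleftrightarrow> I = UNIV"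
  using left_ideal_mult[of I 1] by auto

lemma right_ideal_one_iff_UNIV: "right_ideal I \<Longrightarrow> 1 \<in> I \<longleftrightarrow> I = UNIV"
  using right_ideal_mult[of I 1] by auto

lemma maximal_left_ideal_one: "maximal_left_ideal M \<Longrightarrow> 1 \<notin> M"
  unfolding maximal_left_ideal_def using left_ideal_one_iff_UNIV by blast

lemma maximal_right_ideal_one: "maximal_right_ideal M \<Longrightarrow> 1 \<notin> M"
  unfolding maximal_right_ideal_def using right_ideal_one_iff_UNIV by blast

lemma left_ideal_Union_chain:
  assumes "C \<noteq> {}" and chain: "subset.chain {K. left_ideal K} C"
  shows "left_ideal (\<Union>C)"
  unfolding left_ideal_def
proof (intro conjI ballI allI)
  have ideals: "left_ideal K" if "K \<in> C" for K
    using chain that unfolding subset.chain_def by blast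
  obtain K where "K \<in> C" using assms(1) by blast
  then show "0 \<in> \<Union>C"
    using ideals left_ideal_zero by blast
  show "x - y \<in> \<Union>C" if "x \<in> \<Union>C" and "y \<in> \<Union>C" for x y
  proof -
    obtain X Y where XY: "X \<in> C" "Y \<in> C" and "x \<in> X" "y \<in> Y"
      using \<open>x \<in> \<Union>C\<close> \<open>y \<in> \<Union>C\<close> by blast
    moreover have "X \<subseteq> Y \<or> Y \<subseteq> X"
      using chain XY unfolding subset.chain_def by blast
    ultimately show ?thesis
      using ideals left_ideal_diff by blast
  qed
  show "r * x \<in> \<Union>C" if "x \<in> \<Union>C" for r x
    using that ideals left_ideal_mult by blast
qed

lemma right_ideal_Union_chain:
  assumes "C \<noteq> {}" and chain: "subset.chain {K. right_ideal K} C"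
  shows "right_ideal (\<Union>C)"
  unfolding right_ideal_def
proof (intro conjI ballI allI)
  have ideals: "right_ideal K" if "K \<in> C" for K
    using chain that unfolding subset.chain_def by blast
  obtain K where "K \<in> C" using assms(1) by blast
  then show "0 \<in> \<Union>C"
    using ideals right_ideal_zero by blast
  show "x - y \<in> \<Union>C" if "x \<in> \<Union>C" and "y \<in> \<Union>C" for x y
  proof -
    obtain X Y where XY: "X \<in> C" "Y \<in> C" and "x \<in> X" "y \<in> Y"
      using \<open>x \<in> \<Union>C\<close> \<open>y \<in> \<Union>C\<close> by blast
    moreover have "X \<subseteq> Y \<or> Y \<subseteq> X"
      using chain XY unfolding subset.chain_def by blast
    ultimately show ?thesis
      using ideals right_ideal_diff by blast
  qed
  show "x * r \<in> \<Union>C" if "x \<in> \<Union>C" for r x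
    using that ideals right_ideal_mult by blast
qed

lemma exists_maximal_extension:
  fixes P :: "'a set \<Rightarrow> bool"
  assumes "P I" "a \<notin> I"
    and Union_chain: "\<And>C. C \<noteq> {} \<Longrightarrow> subset.chain {K. P K} C \<Longrightarrow> P (\<Union>C)"
    and proper_iff: "\<And>K. P K \<Longrightarrow> K \<noteq> UNIV \<longleftrightarrow> a \<notin> K"
  shows "\<exists>M. I \<subseteq> M \<and> P M \<and> M \<noteq> UNIV \<and> (\<forall>K. P K \<and> M \<subseteq> K \<and> K \<noteq> UNIV \<longrightarrow> K = M)"
proof -
  define A where "A = {K. P K \<and> I \<subseteq> K \<and> a \<notin> K}"
  have "\<Union>C \<in> A" if "C \<noteq> {}" and chain: "subset.chain A C" for C
  proof -
    have "C \<subseteq> A"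
      using chain unfolding subset.chain_def by blast
    then have "subset.chain {K. P K} C"
      using chain unfolding A_def subset.chain_def by blast
    then have "P (\<Union>C)"
      using Union_chain \<open>C \<noteq> {}\<close> by blast
    moreover have "I \<subseteq> \<Union>C" "a \<notin> \<Union>C"
      using \<open>C \<subseteq> A\<close> \<open>C \<noteq> {}\<close> unfolding A_def by blast+
    ultimately show ?thesis
      unfolding A_def by blast
  qed
  moreover have "I \<in> A"
    using assms(1,2) unfolding A_def by blast
  ultimately obtain M where "M \<in> A" and maximal: "\<forall>K\<in>A. M \<subseteq> K \<longrightarrow> K = M"
    using subset_Zorn_nonempty[of A] by blast
  then have M: "P M" "I \<subseteq> M" "a \<notin> M"
    unfolding A_def by simp_all
  show ?thesis
  proof (intro exI conjI allI impI)
    show "I \<subseteq> M" "P M" "M \<noteq> UNIV"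
      using M proper_iff[of M] by simp_all
    fix K
    assume K: "P K \<and> M \<subseteq> K \<and> K \<noteq> UNIV"
    then have "K \<in> A"
      using proper_iff[of K] \<open>I \<subseteq> M\<close> unfolding A_def by auto
    then show "K = M"
      using maximal K by blast
  qed
qed

lemma not_left_invertible_in_maximal_left_ideal:
  fixes z :: "'a::ring_1"
  assumes "\<nexists>u. u * z = 1"
  shows "\<exists>M. maximal_left_ideal M \<and> z \<in> M"
proof -
  let ?I = "range (\<lambda>s. s * z)"
  have "left_ideal ?I"
    unfolding left_ideal_def
  proof (intro conjI ballI allI)
    show "0 \<in> ?I" by (metis mult_zero_left rangeI)
    show "x - y \<in> ?I" if "x \<in> ?I" "y \<in> ?I" for x y
      using that by (auto simp: left_diff_distrib[symmetric])
    show "r * x \<in> ?I" if "x \<in> ?I" for r x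
      using that by (auto simp: mult.assoc[symmetric])
  qed
  moreover have "1 \<notin> ?I"
    using assms by (metis rangeE)
  ultimately have "\<exists>M. ?I \<subseteq> M \<and> maximal_left_ideal M"
    unfolding maximal_left_ideal_def
    by (intro exists_maximal_extension[where a = 1]) (auto simp: left_ideal_Union_chain left_ideal_one_iff_UNIV)
  moreover have "z \<in> ?I"
    by (rule range_eqI[of _ _ 1]) simp
  ultimately show ?thesis
    by blast
qed

lemma not_right_invertible_in_maximal_right_ideal:
  fixes z :: "'a::ring_1"
  assumes "\<nexists>u. z * u = 1"
  shows "\<exists>M. maximal_right_ideal M \<and> z \<in> M"
proof -
  let ?I = "range (\<lambda>s. z * s)"
  have "right_ideal ?I"
    unfolding right_ideal_def
  proof (intro conjI ballI allI)
    show "0 \<in> ?I" by (metis mult_zero_right rangeI)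
    show "x - y \<in> ?I" if "x \<in> ?I" "y \<in> ?I" for x y
      using that by (auto simp: right_diff_distrib[symmetric])
    show "x * r \<in> ?I" if "x \<in> ?I" for r x
      using that by (auto simp: mult.assoc)
  qed
  moreover have "1 \<notin> ?I"
    using assms by (metis rangeE)
  ultimately have "\<exists>M. ?I \<subseteq> M \<and> maximal_right_ideal M"
    unfolding maximal_right_ideal_def
    by (intro exists_maximal_extension[where a = 1]) (auto simp: right_ideal_Union_chain right_ideal_one_iff_UNIV)
  moreover have "z \<in> ?I"
    by (rule range_eqI[of _ _ 1]) simp
  ultimately show ?thesis
    by blast
qed

definition completely_prime :: "'a::ring_1 set \<Rightarrow> bool" where
  "completely_prime P \<longleftrightarrow> left_ideal P \<and> right_ideal P \<and> 1 \<notin> P \<and>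
     (\<forall>x y. x * y \<in> P \<longrightarrow> x \<in> P \<or> y \<in> P)"

lemma maximal_left_ideal_completely_prime:
  assumes M: "maximal_left_ideal M" and "right_ideal M"
  shows "completely_prime M"
  unfolding completely_prime_def
proof (intro conjI allI impI)
  show "left_ideal M" "right_ideal M" "1 \<notin> M"
    using assms maximal_left_ideal_one unfolding maximal_left_ideal_def by blast+
  fix x y
  assume "x * y \<in> M"
  show "x \<in> M \<or> y \<in> M"
  proof (rule disjCI)
    assume "y \<notin> M"
    let ?K = "{r. r * y \<in> M}"
    have "left_ideal ?K"
      using left_idealD[OF \<open>left_ideal M\<close>] unfolding left_ideal_def
      by (simp add: left_diff_distrib mult.assoc)
    moreover have "M \<subseteq> ?K"
      using right_ideal_mult[OF \<open>right_ideal M\<close>] by blast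
    moreover have "1 \<notin> ?K"
      using \<open>y \<notin> M\<close> by simp
    ultimately have "?K = M"
      using M unfolding maximal_left_ideal_def by (metis UNIV_I)
    then show "x \<in> M"
      using \<open>x * y \<in> M\<close> by blast
  qed
qed

lemma maximal_right_ideal_completely_prime:
  assumes M: "maximal_right_ideal M" and "left_ideal M"
  shows "completely_prime M"
  unfolding completely_prime_def
proof (intro conjI allI impI)
  show "left_ideal M" "right_ideal M" "1 \<notin> M"
    using assms maximal_right_ideal_one unfolding maximal_right_ideal_def by blast+
  fix x y
  assume "x * y \<in> M"
  show "x \<in> M \<or> y \<in> M"
  proof (cases "x \<in> M")
    case False
    let ?K = "{r. x * r \<in> M}"
    have "right_ideal ?K"
      using right_idealD[OF \<open>right_ideal M\<close>] unfolding right_ideal_def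
      by (simp add: right_diff_distrib mult.assoc[symmetric])
    moreover have "M \<subseteq> ?K"
      using left_ideal_mult[OF \<open>left_ideal M\<close>] by blast
    moreover have "1 \<notin> ?K"
      using False by simp
    ultimately have "?K = M"
      using M unfolding maximal_right_ideal_def by (metis UNIV_I)
    then show ?thesis
      using \<open>x * y \<in> M\<close> by blast
  qed simp
qed

lemma completely_prime_power:
  assumes "completely_prime P" and "x ^ n \<in> P"
  shows "x \<in> P"
  using assms(2)
proof (induction n)
  case (Suc n)
  then show ?case
    using assms(1) unfolding completely_prime_def by auto
qed (use assms(1) in \<open>simp add: completely_prime_def\<close>)

lemma completely_prime_nilpotent_swap:
  assumes P: "completely_prime P" and "nilpotent (a * b * c)"
  shows "b * a * c \<in> P"
proof -
  have left: "left_ideal P" and right: "right_ideal P"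
    and prime: "\<And>x y. x * y \<in> P \<Longrightarrow> x \<in> P \<or> y \<in> P"
    using P unfolding completely_prime_def by blast+
  obtain n where "(a * (b * c)) ^ n = 0"
    using assms(2) unfolding nilpotent_def by (auto simp: mult.assoc)
  then have "a * (b * c) \<in> P"
    using completely_prime_power[OF P] left_ideal_zero[OF left] by metis
  then have "a \<in> P \<or> b \<in> P \<or> c \<in> P"
    using prime by blast
  then show ?thesis
    using left_ideal_mult[OF left] right_ideal_mult[OF right] by (metis mult.assoc)
qed

lemma maximal_left_ideal_comaximal:
  assumes M: "maximal_left_ideal M" and "x \<notin> M"
  shows "\<exists>m\<in>M. \<exists>r. m + r * x = 1"
proof -
  have "left_ideal M"
    using M unfolding maximal_left_ideal_def by blast
  let ?K = "{m + r * x | m r. m \<in> M}"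
  have "left_ideal ?K"
    unfolding left_ideal_def
  proof (intro conjI ballI allI)
    have "0 = 0 + 0 * x"
      by simp
    then show "0 \<in> ?K"
      using left_ideal_zero[OF \<open>left_ideal M\<close>] by blast
    show "y - y' \<in> ?K" if y: "y \<in> ?K" and y': "y' \<in> ?K" for y y'
    proof -
      obtain m r m' r' where "y = m + r * x" "y' = m' + r' * x" "m \<in> M" "m' \<in> M"
        using y y' by blast
      then have "y - y' = (m - m') + (r - r') * x" "m - m' \<in> M"
        using left_ideal_diff[OF \<open>left_ideal M\<close>] by (simp_all add: algebra_simps)
      then show ?thesis
        by (intro CollectI exI[of _ "m - m'"] exI[of _ "r - r'"] conjI)
    qed
    show "t * y \<in> ?K" if y: "y \<in> ?K" for t y
    proof -
      obtain m r where "y = m + r * x" "m \<in> M"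
        using y by blast
      then have "t * y = t * m + (t * r) * x" "t * m \<in> M"
        using left_ideal_mult[OF \<open>left_ideal M\<close>] by (simp_all add: algebra_simps)
      then show ?thesis
        by (intro CollectI exI[of _ "t * m"] exI[of _ "t * r"] conjI)
    qed
  qed
  moreover have "M \<subseteq> ?K"
  proof
    fix m
    assume "m \<in> M"
    moreover have "m = m + 0 * x"
      by simp
    ultimately show "m \<in> ?K"
      by blast
  qed
  moreover have "x \<in> ?K"
  proof -
    have "x = 0 + 1 * x"
      by simp
    then show ?thesis
      using left_ideal_zero[OF \<open>left_ideal M\<close>] by blast
  qed
  ultimately have "?K = UNIV"
    using M \<open>x \<notin> M\<close> unfolding maximal_left_ideal_def by (metis (no_types, lifting) UNIV_I)
  then obtain m r where "1 = m + r * x" "m \<in> M"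
    by blast
  then show ?thesis
    by auto
qed

lemma left_inverse_one_minus_swap:
  fixes a b :: "'a::ring_1"
  assumes "u * (1 - a * b) = 1"
  shows "(1 + b * u * a) * (1 - b * a) = 1"
proof -
  have "(1 + b * u * a) * (1 - b * a) = 1 - b * a + b * (u * (1 - a * b)) * a"
    by (simp add: algebra_simps)
  then show ?thesis
    using assms by simp
qed

lemma jacobson_iff_left_invertible:
  "x \<in> jacobson \<longleftrightarrow> (\<forall>r. \<exists>u. u * (1 - r * x) = 1)"
proof
  assume x: "x \<in> jacobson"
  show "\<forall>r. \<exists>u. u * (1 - r * x) = 1"
  proof (rule allI, rule ccontr)
    fix r
    assume "\<nexists>u. u * (1 - r * x) = 1"
    then obtain M where M: "maximal_left_ideal M" and "1 - r * x \<in> M"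
      using not_left_invertible_in_maximal_left_ideal by blast
    moreover have "left_ideal M" and "x \<in> M"
      using M x unfolding maximal_left_ideal_def jacobson_def by blast+
    ultimately have "(1 - r * x) + r * x \<in> M"
      using left_ideal_add left_ideal_mult by blast
    then show False
      using maximal_left_ideal_one[OF M] by simp
  qed
next
  assume units: "\<forall>r. \<exists>u. u * (1 - r * x) = 1"
  show "x \<in> jacobson"
    unfolding jacobson_def
  proof (rule InterI, rule ccontr)
    fix M
    assume "M \<in> {I. maximal_left_ideal I}" and "x \<notin> M"
    then have M: "maximal_left_ideal M"
      by simp
    then obtain m r where "m \<in> M" and "m + r * x = 1"
      using maximal_left_ideal_comaximal \<open>x \<notin> M\<close> by blast
    then have "1 - r * x \<in> M"
      by (metis add_diff_cancel_right')
    moreover obtain u where "u * (1 - r * x) = 1"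
      using units by blast
    moreover have "left_ideal M"
      using M unfolding maximal_left_ideal_def by blast
    ultimately have "1 \<in> M"
      using left_ideal_mult by metis
    then show False
      using maximal_left_ideal_one[OF M] by simp
  qed
qed

lemma left_ideal_jacobson: "left_ideal jacobson"
proof -
  have ideals: "left_ideal M" if "M \<in> {I. maximal_left_ideal I}" for M :: "'a set"
    using that unfolding maximal_left_ideal_def by blast
  show ?thesis
    unfolding left_ideal_def jacobson_def
    using left_ideal_zero[OF ideals] left_ideal_diff[OF ideals] left_ideal_mult[OF ideals]
    by (intro conjI ballI allI InterI) blast+
qed

lemma right_ideal_jacobson: "right_ideal jacobson"
  unfolding right_ideal_def
proof (intro conjI ballI allI)
  show "0 \<in> jacobson" "\<And>x y. x \<in> jacobson \<Longrightarrow> y \<in> jacobson \<Longrightarrow> x - y \<in> jacobson"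
    using left_ideal_zero left_ideal_diff left_ideal_jacobson by blast+
  fix s x :: 'a
  assume "x \<in> jacobson"
  then have "\<exists>u. u * (1 - s * (r * x)) = 1" for r
    using jacobson_iff_left_invertible by (metis mult.assoc)
  then have "\<exists>u. u * (1 - r * (x * s)) = 1" for r
    using left_inverse_one_minus_swap[of _ s "r * x"] by (metis mult.assoc)
  then show "x * s \<in> jacobson"
    using jacobson_iff_left_invertible by blast
qed

lemma jacobson_add: "x \<in> jacobson \<Longrightarrow> y \<in> jacobson \<Longrightarrow> x + y \<in> jacobson"
  using left_ideal_add[OF left_ideal_jacobson] .

lemma jacobson_diff: "x \<in> jacobson \<Longrightarrow> y \<in> jacobson \<Longrightarrow> x - y \<in> jacobson"
  using left_ideal_diff[OF left_ideal_jacobson] .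

lemma jacobson_uminus: "x \<in> jacobson \<Longrightarrow> - x \<in> jacobson"
  using jacobson_diff[OF left_ideal_zero[OF left_ideal_jacobson]] by fastforce

lemma jacobson_mult_left: "x \<in> jacobson \<Longrightarrow> r * x \<in> jacobson"
  using left_ideal_mult[OF left_ideal_jacobson] .

lemma jacobson_mult_right: "x \<in> jacobson \<Longrightarrow> x * r \<in> jacobson"
  using right_ideal_mult[OF right_ideal_jacobson] .

lemma jacobson_if_right_invertible:
  assumes right_units: "\<forall>r. \<exists>u. (1 - x * r) * u = 1"
  shows "x \<in> jacobson"
  unfolding jacobson_iff_left_invertible
proof
  fix r
  obtain w where w: "(1 - x * r) * w = 1"
    using right_units by blast
  then have "w = 1 - x * - (r * w)"
    by (simp add: algebra_simps)
  moreover obtain w' where "(1 - x * - (r * w)) * w' = 1"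
    using right_units by blast
  ultimately have "w * w' = 1"
    by simp
  \<comment> \<open>\<open>w\<close> has the left inverse \<open>1 - xr\<close> and a right inverse, so they coincide\<close>
  then have "1 - x * r = w'"
    using w by (metis mult.assoc mult_1 mult.right_neutral)
  then have "w * (1 - x * r) = 1"
    using \<open>w * w' = 1\<close> by simp
  then show "\<exists>u. u * (1 - r * x) = 1"
    using left_inverse_one_minus_swap by blast
qed

lemma left_quasi_duo_imp_NJ_symmetric:
  assumes "left_quasi_duo TYPE('a::ring_1)"
  shows "NJ_symmetric TYPE('a)"
  unfolding NJ_symmetric_def
proof (intro allI impI)
  fix a b c :: 'a
  assume "nilpotent (a * b * c)"
  moreover have "completely_prime M" if "maximal_left_ideal M" for M :: "'a set"
    using that assms maximal_left_ideal_completely_prime unfolding left_quasi_duo_def by blast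
  ultimately show "b * a * c \<in> jacobson"
    unfolding jacobson_def using completely_prime_nilpotent_swap by blast
qed

lemma right_quasi_duo_imp_NJ_symmetric:
  assumes "right_quasi_duo TYPE('a::ring_1)"
  shows "NJ_symmetric TYPE('a)"
  unfolding NJ_symmetric_def
proof (intro allI impI)
  fix a b c :: 'a
  assume nilpotent: "nilpotent (a * b * c)"
  show "b * a * c \<in> jacobson"
  proof (rule jacobson_if_right_invertible, rule allI, rule ccontr)
    fix r
    assume "\<nexists>u. (1 - b * a * c * r) * u = 1"
    then obtain M where M: "maximal_right_ideal M" and "1 - b * a * c * r \<in> M"
      using not_right_invertible_in_maximal_right_ideal by blast
    have "right_ideal M"
      using M unfolding maximal_right_ideal_def by blast
    have "left_ideal M"
      using M assms unfolding right_quasi_duo_def by blast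
    with M have "b * a * c \<in> M"
      using maximal_right_ideal_completely_prime completely_prime_nilpotent_swap nilpotent by blast
    then have "(1 - b * a * c * r) + b * a * c * r \<in> M"
      using right_ideal_add[OF \<open>right_ideal M\<close> \<open>1 - b * a * c * r \<in> M\<close>]
        right_ideal_mult[OF \<open>right_ideal M\<close>] by blast
    then show False
      using maximal_right_ideal_one[OF M] by simp
  qed
qed

context
  assumes idempotent_mod_jacobson: "\<And>x::'a::ring_1. x * x - x \<in> jacobson"
begin

lemma power_Suc_minus_self_mem_jacobson: "(x::'a) ^ Suc n - x \<in> jacobson"
proof (induction n)
  case 0
  then show ?case
    using left_ideal_zero[OF left_ideal_jacobson] by simp
next
  case (Suc n)
  have "x ^ Suc (Suc n) - x = x * (x ^ Suc n - x) + (x * x - x)"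
    by (simp add: algebra_simps)
  then show ?case
    using Suc.IH idempotent_mod_jacobson jacobson_add jacobson_mult_left by metis
qed

lemma commutator_mem_jacobson: "(x::'a) * y - y * x \<in> jacobson"
proof -
  have anticommutator: "u * v + v * u \<in> jacobson" for u v :: 'a
  proof -
    have "u * v + v * u = ((u + v) * (u + v) - (u + v)) - (u * u - u) - (v * v - v)"
      by (simp add: algebra_simps)
    then show ?thesis
      using idempotent_mod_jacobson jacobson_diff by metis
  qed
  have "y + y \<in> jacobson"
  proof -
    have "y + y = (y * y + y * y) - (y * y - y) - (y * y - y)"
      by (simp add: algebra_simps)
    then show ?thesis
      using anticommutator idempotent_mod_jacobson jacobson_diff by metis
  qed
  moreover have "x * y - y * x = (x * y + y * x) - (y + y) * x"
    by (simp add: algebra_simps)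
  ultimately show ?thesis
    using anticommutator jacobson_diff jacobson_mult_right by metis
qed

lemma NJ_symmetric_if_idempotent_mod_jacobson: "NJ_symmetric TYPE('a)"
  unfolding NJ_symmetric_def
proof (intro allI impI)
  fix a b c :: 'a
  assume "nilpotent (a * b * c)"
  then obtain n where "(a * b * c) ^ Suc n = 0"
    unfolding nilpotent_def by (metis not0_implies_Suc power_0 zero_neq_one mult_zero_left)
  then have "- (a * b * c) \<in> jacobson"
    using power_Suc_minus_self_mem_jacobson by (metis diff_0)
  then have "a * b * c \<in> jacobson"
    using jacobson_uminus by fastforce
  moreover have "b * a * c = (b * a - a * b) * c + a * b * c"
    by (simp add: algebra_simps)
  ultimately show "b * a * c \<in> jacobson"
    using commutator_mem_jacobson jacobson_mult_right jacobson_add by metis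
qed

end

lemma J_clean_idempotent_mod_jacobson:
  assumes "J_clean TYPE('a::ring_1)"
  shows "(x::'a) * x - x \<in> jacobson"
proof -
  obtain e j where "e * e = e" and j: "j \<in> jacobson" and "x = e + j"
    using assms unfolding J_clean_def by blast
  then have "x * x - x = e * j + j * e + j * j - j"
    by (simp add: algebra_simps)
  then show ?thesis
    using j jacobson_mult_left jacobson_mult_right jacobson_add jacobson_diff by metis
qed

lemma J_quasipolar_imp_J_clean:
  assumes "J_quasipolar TYPE('a::ring_1)"
  shows "J_clean TYPE('a)"
  unfolding J_clean_def
proof
  fix a :: 'a
  obtain f where "f * f = f" and "- a + f \<in> jacobson"
    using assms unfolding J_quasipolar_def by blast
  moreover have "a - f \<in> jacobson"
    using jacobson_uminus[OF \<open>- a + f \<in> jacobson\<close>] by simp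
  moreover have "a = f + (a - f)"
    by simp
  ultimately show "\<exists>e j. e * e = e \<and> j \<in> jacobson \<and> a = e + j"
    by blast
qed

lemma power_Suc_mult_swap: "((q::'a::ring_1) * p) ^ Suc n = q * (p * q) ^ n * p"
proof (induction n)
  case (Suc n)
  have "(q * p) ^ Suc (Suc n) = q * (p * (q * (p * q) ^ n * p))"
    using Suc.IH by (simp add: mult.assoc)
  also have "\<dots> = q * ((p * q) * (p * q) ^ n) * p"
    by (simp add: mult.assoc)
  finally show ?case
    by simp
qed simp

lemma nilpotent_mult_commute: "nilpotent ((p::'a::ring_1) * q) \<Longrightarrow> nilpotent (q * p)"
  unfolding nilpotent_def using power_Suc_mult_swap by (metis mult_zero_left mult_zero_right)

lemma nilpotent_if_square: "nilpotent ((y::'a::ring_1) * y) \<Longrightarrow> nilpotent y"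
  unfolding nilpotent_def by (metis power2_eq_square power_mult)

lemma geometric_sum_mult: "(\<Sum>i<n. (z::'a::ring_1) ^ i) * (1 - z) = 1 - z ^ n"
proof (induction n)
  case (Suc n)
  have "(\<Sum>i<Suc n. z ^ i) * (1 - z) = (\<Sum>i<n. z ^ i) * (1 - z) + z ^ n * (1 - z)"
    by (simp add: distrib_right)
  also have "\<dots> = 1 - z ^ Suc n"
    using Suc.IH by (simp add: algebra_simps power_Suc2 power_commutes)
  finally show ?case .
qed simp

lemma left_invertible_one_minus_nilpotent: "nilpotent (z::'a::ring_1) \<Longrightarrow> \<exists>u. u * (1 - z) = 1"
  unfolding nilpotent_def using geometric_sum_mult by (metis diff_zero)

context
  assumes GWS: "GWS TYPE('a::ring_1)"
    and index_two: "\<And>x::'a. nilpotent x \<Longrightarrow> x ^ 2 = 0"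
begin

lemma nilpotent_mult_right: "nilpotent (x::'a) \<Longrightarrow> nilpotent (x * r)"
proof -
  assume "nilpotent x"
  then have "x * x = 0"
    using index_two by (simp add: power2_eq_square)
  then have "x * (x * r) * r = 0"
    by (simp add: mult.assoc[symmetric])
  then have "nilpotent ((x * r) * x * r)"
    using GWS unfolding GWS_def by blast
  then have "nilpotent ((x * r) * (x * r))"
    by (simp add: mult.assoc)
  then show "nilpotent (x * r)"
    by (rule nilpotent_if_square)
qed

lemma nilpotent_mult_left: "nilpotent (x::'a) \<Longrightarrow> nilpotent (r * x)"
  using nilpotent_mult_right nilpotent_mult_commute by blast

lemma nilpotent_insert: "nilpotent ((p::'a) * q) \<Longrightarrow> nilpotent (p * r * q)"
proof -
  assume "nilpotent (p * q)"
  then have "nilpotent ((p * r) * (q * p) * (r * q))"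
    using nilpotent_mult_commute nilpotent_mult_left nilpotent_mult_right by blast
  then have "nilpotent ((p * r * q) * (p * r * q))"
    by (simp add: mult.assoc)
  then show "nilpotent (p * r * q)"
    by (rule nilpotent_if_square)
qed

lemma nilpotent_swap_left: "nilpotent ((a::'a) * b * c) \<Longrightarrow> nilpotent (b * a * c)"
proof -
  assume "nilpotent (a * b * c)"
  then have "nilpotent (b * c * a)"
    using nilpotent_mult_commute[of a "b * c"] by (simp add: mult.assoc)
  then have "nilpotent (b * (c * a))"
    by (simp add: mult.assoc)
  then have "nilpotent (b * a * (c * a))"
    using nilpotent_insert by blast
  then have "nilpotent ((b * a * c) * a)"
    by (simp add: mult.assoc)
  then have "nilpotent ((b * a * c) * b * a)"
    by (rule nilpotent_insert)
  then have "nilpotent ((b * a * c) * b * a * c)"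
    using nilpotent_mult_right by blast
  then have "nilpotent ((b * a * c) * (b * a * c))"
    by (simp add: mult.assoc)
  then show "nilpotent (b * a * c)"
    by (rule nilpotent_if_square)
qed

lemma GWS_index_two_imp_NJ_symmetric: "NJ_symmetric TYPE('a)"
  unfolding NJ_symmetric_def jacobson_iff_left_invertible
  using nilpotent_swap_left nilpotent_mult_left left_invertible_one_minus_nilpotent by blast

end

theorem theorem2p4:
  assumes "(left_quasi_duo TYPE('a::ring_1) \<or> right_quasi_duo TYPE('a))
         \<or> (abelian_ring TYPE('a) \<and> J_clean TYPE('a))
         \<or> (abelian_ring TYPE('a) \<and> J_quasipolar TYPE('a))
         \<or> (GWS TYPE('a) \<and> (\<forall>x::'a. nilpotent x \<longrightarrow> x ^ 2 = 0))"
  shows "NJ_symmetric TYPE('a)"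
proof -
  have J_clean_case: "NJ_symmetric TYPE('a)" if "J_clean TYPE('a)"
    using NJ_symmetric_if_idempotent_mod_jacobson J_clean_idempotent_mod_jacobson[OF that] by blast
  show ?thesis
    using assms
  proof (elim disjE conjE)
    show "left_quasi_duo TYPE('a) \<Longrightarrow> ?thesis"
      by (rule left_quasi_duo_imp_NJ_symmetric)
    show "right_quasi_duo TYPE('a) \<Longrightarrow> ?thesis"
      by (rule right_quasi_duo_imp_NJ_symmetric)
    show "J_clean TYPE('a) \<Longrightarrow> ?thesis"
      by (rule J_clean_case)
    show "J_quasipolar TYPE('a) \<Longrightarrow> ?thesis"
      by (rule J_clean_case[OF J_quasipolar_imp_J_clean])
    show "GWS TYPE('a) \<Longrightarrow> \<forall>x::'a. nilpotent x \<longrightarrow> x ^ 2 = 0 \<Longrightarrow> ?thesis"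
      using GWS_index_two_imp_NJ_symmetric by blast
  qed
qed

end
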